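(* Let $\mathcal{S}=(Q,E,\delta,Q_0,\Sigma,\ell)$ be a labeled finite-state automaton, $Q_S\subset Q$ a set of secret states, and $K$ a positive integer with $K>2^{|Q\setminus Q_S|}-2$. Then $\mathcal{S}$ is strongly infinite-step opaque with respect to $Q_S$ if and only if $\mathcal{S}$ is strongly $K$-step opaque with respect to $Q_S$.
   Context: A labeled finite-state automaton is $\mathcal{S}=(Q,E,\delta,Q_0,\Sigma,\ell)$ with finite state set $Q$, finite event alphabet $E$, transition relation $\delta\subset Q\times E\times Q$, initial states $Q_0\subset Q$, finite output alphabet $\Sigma$, and labeling $\ell:E\to\Sigma\cup\{\epsilon\}$ ($\epsilon$ the empty word), extended morphically to event words. A run $q\xrightarrow{s}q'$ ($s\in E^*$) is a sequence of transitions from $q$ to $q'$ reading $s$. A run is non-secret if none of its states (including first and last) lies in $Q_S$. Strong infinite-step opacity: $\mathcal{S}$ is strongly infinite-step opaque w.r.t. $Q_S$ if for every run $q_0\xrightarrow{s_1}q_1\xrightarrow{s_2}q_2$ with $q_0\in Q_0$ and $q_1\in Q_S$ there is a non-secret run $q_0'\xrightarrow{s_1'}q_1'\xrightarrow{s_2'}q_2'$ with $q_0'\in Q_0$, $\ell(s_1)=\ell(s_1')$, $\ell(s_2)=\ell(s_2')$. Strong $K$-step opacity ($K$ a positive integer): the same requirement imposed only on runs with $|\ell(s_2)|\le K$. *)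

theory Defs
  imports Main
begin

text \<open>A labeled finite-state automaton (Q, E, delta, Q0, Sig, ell).
  The empty word epsilon as a label is encoded by None: ell :: 'e => 's option.\<close>

definition lfsa ::
  "'q set \<Rightarrow> 'e set \<Rightarrow> ('q \<times> 'e \<times> 'q) set \<Rightarrow> 'q set \<Rightarrow> 's set \<Rightarrow> ('e \<Rightarrow> 's option) \<Rightarrow> bool" where
  "lfsa Q E delta Q0 Sig ell \<longleftrightarrow>
     finite Q \<and> finite E \<and> finite Sig \<and> delta \<subseteq> Q \<times> E \<times> Q \<and> Q0 \<subseteq> Q \<and>
     (\<forall>e\<in>E. ell e = None \<or> the (ell e) \<in> Sig)"

definition lab :: "('e \<Rightarrow> 's option) \<Rightarrow> 'e list \<Rightarrow> 's list" where
  "lab ell s = concat (map (\<lambda>e. case ell e of None \<Rightarrow> [] | Some a \<Rightarrow> [a]) s)"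

definition run_states :: "('q \<times> 'e \<times> 'q) set \<Rightarrow> 'q list \<Rightarrow> 'q \<Rightarrow> 'e list \<Rightarrow> 'q \<Rightarrow> bool" where
  "run_states delta qs q s q' \<longleftrightarrow>
     length qs = Suc (length s) \<and> hd qs = q \<and> last qs = q' \<and>
     (\<forall>i<length s. (qs ! i, s ! i, qs ! Suc i) \<in> delta)"

definition run :: "('q \<times> 'e \<times> 'q) set \<Rightarrow> 'q \<Rightarrow> 'e list \<Rightarrow> 'q \<Rightarrow> bool" where
  "run delta q s q' \<longleftrightarrow> (\<exists>qs. run_states delta qs q s q')"

definition nonsecret_run :: "('q \<times> 'e \<times> 'q) set \<Rightarrow> 'q set \<Rightarrow> 'q \<Rightarrow> 'e list \<Rightarrow> 'q \<Rightarrow> bool" where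
  "nonsecret_run delta QS q s q' \<longleftrightarrow> (\<exists>qs. run_states delta qs q s q' \<and> set qs \<inter> QS = {})"

definition strong_inf_step_opaque ::
  "('q \<times> 'e \<times> 'q) set \<Rightarrow> 'q set \<Rightarrow> ('e \<Rightarrow> 's option) \<Rightarrow> 'q set \<Rightarrow> bool" where
  "strong_inf_step_opaque delta Q0 ell QS \<longleftrightarrow>
    (\<forall>q0 s1 q1 s2 q2. q0 \<in> Q0 \<and> q1 \<in> QS \<and> run delta q0 s1 q1 \<and> run delta q1 s2 q2 \<longrightarrow>
      (\<exists>q0' s1' q1' s2' q2'. q0' \<in> Q0 \<and> nonsecret_run delta QS q0' s1' q1' \<and>
         nonsecret_run delta QS q1' s2' q2' \<and> lab ell s1 = lab ell s1' \<and> lab ell s2 = lab ell s2'))"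

definition strong_K_step_opaque ::
  "('q \<times> 'e \<times> 'q) set \<Rightarrow> 'q set \<Rightarrow> ('e \<Rightarrow> 's option) \<Rightarrow> 'q set \<Rightarrow> nat \<Rightarrow> bool" where
  "strong_K_step_opaque delta Q0 ell QS K \<longleftrightarrow>
    (\<forall>q0 s1 q1 s2 q2. q0 \<in> Q0 \<and> q1 \<in> QS \<and> run delta q0 s1 q1 \<and> run delta q1 s2 q2 \<and>
        length (lab ell s2) \<le> K \<longrightarrow>
      (\<exists>q0' s1' q1' s2' q2'. q0' \<in> Q0 \<and> nonsecret_run delta QS q0' s1' q1' \<and>
         nonsecret_run delta QS q1' s2' q2' \<and> lab ell s1 = lab ell s1' \<and> lab ell s2 = lab ell s2'))"

end

theory Submission
  imports Defs
begin

text \<open>Both opacity conditions only depend on the observations u = lab s1 before and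
  v = lab s2 after the secret visit: they fail exactly when the system can visit a secret
  state, observe u up to it and v afterwards, while no non-secret run from an initial state
  produces u @ v. Take such a revealing pair with v as short as possible. By minimality, the
  run after the first observation of v avoids secret states, so every state reached after a
  nonempty prefix take i v lies in the set F i of non-secret states from which drop i v can be
  observed along a non-secret run. These are nonempty subsets of Q - QS; if
  length v \<ge> 2 ^ card (Q - QS), two of them coincide, F i = F j with i < j, and cutting out
  the observations between positions i and j yields a shorter revealing pair. Hence a
  shortest revealing pair has length v < 2 ^ card (Q - QS) \<le> K + 1.\<close>

lemma pigeonhole_interval:
  assumes "f ` {1..m} \<subseteq> B" "finite B" "card B < m"
  obtains i j where "1 \<le> i" "i < j" "j \<le> m" "f i = f j"
proof -
  have "\<not> inj_on f {1..m}"
    using card_inj_on_le[of f "{1..m}" B] assms by auto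
  then obtain i j where "i \<in> {1..m}" "j \<in> {1..m}" "i \<noteq> j" "f i = f j"
    unfolding inj_on_def by blast
  then show ?thesis
    using that by (cases "i < j") (auto simp: not_less_iff_gr_or_eq)
qed

lemma run_states_Nil [simp]: "run_states delta qs p [] q \<longleftrightarrow> qs = [p] \<and> q = p"
  unfolding run_states_def by (cases qs) auto

lemma run_states_Cons [simp]:
  "run_states delta qs p (e # s) q \<longleftrightarrow>
    (\<exists>p' qs'. qs = p # qs' \<and> (p, e, p') \<in> delta \<and> run_states delta qs' p' s q)"
proof (cases qs)
  case (Cons a qs')
  then show ?thesis
    by (cases qs') (auto simp: run_states_def All_less_Suc2 hd_conv_nth)
qed (simp add: run_states_def)

lemma run_Nil [simp]: "run delta p [] q \<longleftrightarrow> q = p"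
  unfolding run_def by simp

lemma run_Cons [simp]: "run delta p (e # s) q \<longleftrightarrow> (\<exists>p'. (p, e, p') \<in> delta \<and> run delta p' s q)"
  unfolding run_def by auto

lemma nonsecret_run_Nil [simp]: "nonsecret_run delta QS p [] q \<longleftrightarrow> q = p \<and> p \<notin> QS"
  unfolding nonsecret_run_def by auto

lemma nonsecret_run_Cons [simp]:
  "nonsecret_run delta QS p (e # s) q \<longleftrightarrow>
    p \<notin> QS \<and> (\<exists>p'. (p, e, p') \<in> delta \<and> nonsecret_run delta QS p' s q)"
proof
  assume "nonsecret_run delta QS p (e # s) q"
  then obtain p' qs where "(p, e, p') \<in> delta" "run_states delta qs p' s q" "set (p # qs) \<inter> QS = {}"
    unfolding nonsecret_run_def by auto
  then show "p \<notin> QS \<and> (\<exists>p'. (p, e, p') \<in> delta \<and> nonsecret_run delta QS p' s q)"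
    unfolding nonsecret_run_def by auto
next
  assume "p \<notin> QS \<and> (\<exists>p'. (p, e, p') \<in> delta \<and> nonsecret_run delta QS p' s q)"
  then obtain p' qs where "p \<notin> QS" "(p, e, p') \<in> delta" "run_states delta qs p' s q" "set qs \<inter> QS = {}"
    unfolding nonsecret_run_def by auto
  then show "nonsecret_run delta QS p (e # s) q"
    unfolding nonsecret_run_def by (intro exI[of _ "p # qs"]) auto
qed

lemma nonsecret_run_source: "nonsecret_run delta QS p s q \<Longrightarrow> p \<notin> QS"
  by (cases s) auto

lemma run_append_iff: "run delta p (s @ t) q \<longleftrightarrow> (\<exists>x. run delta p s x \<and> run delta x t q)"
  by (induction s arbitrary: p) auto

lemma nonsecret_run_append_iff:
  "nonsecret_run delta QS p (s @ t) q \<longleftrightarrow> (\<exists>x. nonsecret_run delta QS p s x \<and> nonsecret_run delta QS x t q)"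
  by (induction s arbitrary: p) (auto dest: nonsecret_run_source)

lemma nonsecret_run_imp_run: "nonsecret_run delta QS p s q \<Longrightarrow> run delta p s q"
  by (induction s arbitrary: p) auto

lemma run_closed:
  assumes "delta \<subseteq> Q \<times> E \<times> Q" "p \<in> Q" "run delta p s q"
  shows "q \<in> Q"
  using assms(2,3) by (induction s arbitrary: p) (use assms(1) in auto)

lemma run_nonsecret_or_visits_secret:
  assumes "run delta p s q"
  shows "nonsecret_run delta QS p s q \<or>
    (\<exists>s1 s2 z. s = s1 @ s2 \<and> run delta p s1 z \<and> z \<in> QS \<and> run delta z s2 q)"
  using assms
proof (induction s arbitrary: p)
  case (Cons e s)
  then obtain p' where "(p, e, p') \<in> delta" "run delta p' s q" by auto
  show ?case
  proof (cases "p \<in> QS")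
    case True
    then show ?thesis using Cons.prems by (intro disjI2 exI[of _ "[]"] exI[of _ "e # s"] exI[of _ p]) simp
  next
    case False
    from Cons.IH[OF \<open>run delta p' s q\<close>] show ?thesis
    proof
      assume "nonsecret_run delta QS p' s q"
      then show ?thesis using False \<open>(p, e, p') \<in> delta\<close> by auto
    next
      assume "\<exists>s1 s2 z. s = s1 @ s2 \<and> run delta p' s1 z \<and> z \<in> QS \<and> run delta z s2 q"
      then show ?thesis using \<open>(p, e, p') \<in> delta\<close> by (metis append_Cons run_Cons)
    qed
  qed
qed (auto intro: exI[of _ "[]"])

lemma lab_Nil [simp]: "lab ell [] = []"
  by (simp add: lab_def)

lemma lab_Cons [simp]: "lab ell (e # s) = (case ell e of None \<Rightarrow> [] | Some a \<Rightarrow> [a]) @ lab ell s"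
  by (simp add: lab_def)

lemma lab_append [simp]: "lab ell (s @ t) = lab ell s @ lab ell t"
  by (simp add: lab_def)

lemma lab_eq_append_conv:
  "lab ell s = u @ w \<longleftrightarrow> (\<exists>s1 s2. s = s1 @ s2 \<and> lab ell s1 = u \<and> lab ell s2 = w)"
proof
  show "lab ell s = u @ w \<Longrightarrow> \<exists>s1 s2. s = s1 @ s2 \<and> lab ell s1 = u \<and> lab ell s2 = w"
  proof (induction s arbitrary: u)
    case (Cons e s)
    show ?case
    proof (cases "u = []")
      case True
      with Cons.prems show ?thesis by (intro exI[of _ "[]"] exI[of _ "e # s"]) simp
    next
      case False
      with Cons.prems obtain u' where "lab ell s = u' @ w" "\<And>s1. lab ell s1 = u' \<Longrightarrow> lab ell (e # s1) = u"
        by (cases "ell e"; cases u) auto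
      with Cons.IH show ?thesis by (metis append_Cons)
    qed
  qed simp
qed auto

definition obs_run :: "('q \<times> 'e \<times> 'q) set \<Rightarrow> ('e \<Rightarrow> 's option) \<Rightarrow> 'q \<Rightarrow> 's list \<Rightarrow> 'q \<Rightarrow> bool" where
  "obs_run delta ell p w q \<longleftrightarrow> (\<exists>s. run delta p s q \<and> lab ell s = w)"

definition nonsecret_obs_run ::
  "('q \<times> 'e \<times> 'q) set \<Rightarrow> 'q set \<Rightarrow> ('e \<Rightarrow> 's option) \<Rightarrow> 'q \<Rightarrow> 's list \<Rightarrow> 'q \<Rightarrow> bool" where
  "nonsecret_obs_run delta QS ell p w q \<longleftrightarrow> (\<exists>s. nonsecret_run delta QS p s q \<and> lab ell s = w)"

lemma ex_lab_eq_append_iff: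
  assumes append_iff: "\<And>p s t q. R p (s @ t) q \<longleftrightarrow> (\<exists>x. R p s x \<and> R x t q)"
  shows "(\<exists>s. R p s q \<and> lab ell s = u @ w) \<longleftrightarrow>
    (\<exists>x. (\<exists>s. R p s x \<and> lab ell s = u) \<and> (\<exists>s. R x s q \<and> lab ell s = w))"
proof
  assume "\<exists>s. R p s q \<and> lab ell s = u @ w"
  then obtain s1 s2 where "R p (s1 @ s2) q" "lab ell s1 = u" "lab ell s2 = w"
    unfolding lab_eq_append_conv by blast
  then show "\<exists>x. (\<exists>s. R p s x \<and> lab ell s = u) \<and> (\<exists>s. R x s q \<and> lab ell s = w)"
    unfolding append_iff by blast
next
  assume "\<exists>x. (\<exists>s. R p s x \<and> lab ell s = u) \<and> (\<exists>s. R x s q \<and> lab ell s = w)"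
  then obtain x s1 s2 where "R p s1 x" "lab ell s1 = u" "R x s2 q" "lab ell s2 = w"
    by blast
  then show "\<exists>s. R p s q \<and> lab ell s = u @ w"
    by (intro exI[of _ "s1 @ s2"]) (auto simp: append_iff)
qed

lemma obs_run_append_iff:
  "obs_run delta ell p (u @ w) q \<longleftrightarrow> (\<exists>x. obs_run delta ell p u x \<and> obs_run delta ell x w q)"
  unfolding obs_run_def by (rule ex_lab_eq_append_iff) (rule run_append_iff)

lemma nonsecret_obs_run_append_iff:
  "nonsecret_obs_run delta QS ell p (u @ w) q \<longleftrightarrow>
    (\<exists>x. nonsecret_obs_run delta QS ell p u x \<and> nonsecret_obs_run delta QS ell x w q)"
  unfolding nonsecret_obs_run_def by (rule ex_lab_eq_append_iff) (rule nonsecret_run_append_iff)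

lemma nonsecret_obs_run_imp_obs_run: "nonsecret_obs_run delta QS ell p w q \<Longrightarrow> obs_run delta ell p w q"
  unfolding nonsecret_obs_run_def obs_run_def by (blast intro: nonsecret_run_imp_run)

lemma nonsecret_obs_run_source: "nonsecret_obs_run delta QS ell p w q \<Longrightarrow> p \<notin> QS"
  unfolding nonsecret_obs_run_def by (blast dest: nonsecret_run_source)

lemma obs_run_closed: "delta \<subseteq> Q \<times> E \<times> Q \<Longrightarrow> p \<in> Q \<Longrightarrow> obs_run delta ell p w q \<Longrightarrow> q \<in> Q"
  unfolding obs_run_def by (blast intro: run_closed)

lemma obs_run_nonsecret_or_visits_secret:
  assumes "obs_run delta ell p w q"
  shows "nonsecret_obs_run delta QS ell p w q \<or>
    (\<exists>w1 w2 z. w = w1 @ w2 \<and> obs_run delta ell p w1 z \<and> z \<in> QS \<and> obs_run delta ell z w2 q)"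
proof -
  obtain s where "run delta p s q" "lab ell s = w"
    using assms unfolding obs_run_def by blast
  from run_nonsecret_or_visits_secret[OF this(1), of QS] show ?thesis
  proof
    assume "nonsecret_run delta QS p s q"
    with \<open>lab ell s = w\<close> show ?thesis
      unfolding nonsecret_obs_run_def by blast
  next
    assume "\<exists>s1 s2 z. s = s1 @ s2 \<and> run delta p s1 z \<and> z \<in> QS \<and> run delta z s2 q"
    then obtain s1 s2 z where "s = s1 @ s2" "run delta p s1 z" "z \<in> QS" "run delta z s2 q"
      by blast
    with \<open>lab ell s = w\<close> show ?thesis
      unfolding obs_run_def by (intro disjI2 exI[of _ "lab ell s1"] exI[of _ "lab ell s2"] exI[of _ z]) auto
  qed
qed

definition nonsecret_observable ::
  "('q \<times> 'e \<times> 'q) set \<Rightarrow> 'q set \<Rightarrow> ('e \<Rightarrow> 's option) \<Rightarrow> 'q set \<Rightarrow> 's list \<Rightarrow> bool" where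
  "nonsecret_observable delta Q0 ell QS w \<longleftrightarrow> (\<exists>q0\<in>Q0. \<exists>q. nonsecret_obs_run delta QS ell q0 w q)"

definition secret_revealed ::
  "('q \<times> 'e \<times> 'q) set \<Rightarrow> 'q set \<Rightarrow> ('e \<Rightarrow> 's option) \<Rightarrow> 'q set \<Rightarrow> 's list \<Rightarrow> 's list \<Rightarrow> bool" where
  "secret_revealed delta Q0 ell QS u v \<longleftrightarrow>
    (\<exists>q0\<in>Q0. \<exists>q1\<in>QS. \<exists>q2. obs_run delta ell q0 u q1 \<and> obs_run delta ell q1 v q2) \<and>
    \<not> nonsecret_observable delta Q0 ell QS (u @ v)"

lemma nonsecret_observable_append_iff:
  "nonsecret_observable delta Q0 ell QS (u @ v) \<longleftrightarrow>
    (\<exists>q0 s1 q1 s2 q2. q0 \<in> Q0 \<and> nonsecret_run delta QS q0 s1 q1 \<and> nonsecret_run delta QS q1 s2 q2 \<and>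
      u = lab ell s1 \<and> v = lab ell s2)"
  unfolding nonsecret_observable_def nonsecret_obs_run_append_iff
  unfolding nonsecret_obs_run_def by blast

lemma strong_inf_step_opaque_iff:
  "strong_inf_step_opaque delta Q0 ell QS \<longleftrightarrow> (\<forall>u v. \<not> secret_revealed delta Q0 ell QS u v)"
  unfolding strong_inf_step_opaque_def nonsecret_observable_append_iff[symmetric]
  unfolding secret_revealed_def obs_run_def by blast

lemma strong_K_step_opaque_iff:
  "strong_K_step_opaque delta Q0 ell QS K \<longleftrightarrow>
    (\<forall>u v. secret_revealed delta Q0 ell QS u v \<longrightarrow> K < length v)"
  unfolding strong_K_step_opaque_def nonsecret_observable_append_iff[symmetric]
  unfolding secret_revealed_def obs_run_def not_less[symmetric] by blast

definition nonsecret_enabled ::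
  "('q \<times> 'e \<times> 'q) set \<Rightarrow> 'q set \<Rightarrow> ('e \<Rightarrow> 's option) \<Rightarrow> 'q set \<Rightarrow> 's list \<Rightarrow> 'q set" where
  "nonsecret_enabled delta QS ell Q w = {x \<in> Q. \<exists>q. nonsecret_obs_run delta QS ell x w q}"

lemma nonsecret_enabled_subset: "nonsecret_enabled delta QS ell Q w \<subseteq> Q - QS"
  unfolding nonsecret_enabled_def by (auto dest: nonsecret_obs_run_source)

lemma nonsecret_observable_append_cong:
  assumes closed: "delta \<subseteq> Q \<times> E \<times> Q" "Q0 \<subseteq> Q"
    and same: "nonsecret_enabled delta QS ell Q w = nonsecret_enabled delta QS ell Q w'"
  shows "nonsecret_observable delta Q0 ell QS (u @ w) \<longleftrightarrow> nonsecret_observable delta Q0 ell QS (u @ w')"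
proof -
  have "nonsecret_observable delta Q0 ell QS (u @ w2)"
    if observable: "nonsecret_observable delta Q0 ell QS (u @ w1)"
      and enabled: "nonsecret_enabled delta QS ell Q w1 = nonsecret_enabled delta QS ell Q w2" for w1 w2
  proof -
    obtain q0 x q where "q0 \<in> Q0" and prefix: "nonsecret_obs_run delta QS ell q0 u x"
      and "nonsecret_obs_run delta QS ell x w1 q"
      using observable unfolding nonsecret_observable_def nonsecret_obs_run_append_iff by blast
    moreover have "x \<in> Q"
      using obs_run_closed[OF closed(1) _ nonsecret_obs_run_imp_obs_run[OF prefix]] \<open>q0 \<in> Q0\<close> closed(2)
      by blast
    ultimately have "x \<in> nonsecret_enabled delta QS ell Q w2"
      using enabled unfolding nonsecret_enabled_def by blast
    with \<open>q0 \<in> Q0\<close> prefix show ?thesis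
      unfolding nonsecret_observable_def nonsecret_enabled_def nonsecret_obs_run_append_iff by blast
  qed
  from this[of w w'] this[of w' w] same show ?thesis
    by blast
qed

lemma shortest_secret_revealed_nonsecret_suffix:
  assumes shortest: "\<And>u' v'. secret_revealed delta Q0 ell QS u' v' \<Longrightarrow> length (a @ b) \<le> length v'"
    and "q0 \<in> Q0" "obs_run delta ell q0 (u @ a) x" "obs_run delta ell x b q"
    and "\<not> nonsecret_observable delta Q0 ell QS (u @ a @ b)" "a \<noteq> []"
  shows "nonsecret_obs_run delta QS ell x b q"
proof (rule ccontr)
  assume "\<not> ?thesis"
  then obtain b1 b2 z where "b = b1 @ b2" "obs_run delta ell x b1 z" "z \<in> QS" "obs_run delta ell z b2 q"
    using obs_run_nonsecret_or_visits_secret[OF assms(4)] by blast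
  with assms(2-5) have "secret_revealed delta Q0 ell QS (u @ a @ b1) b2"
    unfolding secret_revealed_def by (auto simp: obs_run_append_iff)
  then have "length (a @ b) \<le> length b2" by (rule shortest)
  with \<open>b = b1 @ b2\<close> \<open>a \<noteq> []\<close> show False by simp
qed

lemma shortest_secret_revealed_length:
  assumes closed: "delta \<subseteq> Q \<times> E \<times> Q" "Q0 \<subseteq> Q" and "finite Q"
    and revealed: "secret_revealed delta Q0 ell QS u v"
    and shortest: "\<And>u' v'. secret_revealed delta Q0 ell QS u' v' \<Longrightarrow> length v \<le> length v'"
  shows "length v < 2 ^ card (Q - QS)"
proof (rule ccontr)
  assume "\<not> ?thesis"
  moreover have "card (Pow (Q - QS) - {{}}) = 2 ^ card (Q - QS) - 1"
    using \<open>finite Q\<close> by (simp add: card_Pow)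
  moreover have "0 < (2::nat) ^ card (Q - QS)"
    by simp
  ultimately have long: "card (Pow (Q - QS) - {{}}) < length v"
    by linarith
  obtain q0 q1 q2 where "q0 \<in> Q0" "q1 \<in> QS" "obs_run delta ell q0 u q1" "obs_run delta ell q1 v q2"
    and hidden: "\<not> nonsecret_observable delta Q0 ell QS (u @ v)"
    using revealed unfolding secret_revealed_def by blast
  define F where "F i = nonsecret_enabled delta QS ell Q (drop i v)" for i
  have after_prefix: "\<exists>x \<in> F i. obs_run delta ell q1 (take i v) x" if "1 \<le> i" "i \<le> length v" for i
  proof -
    obtain x where prefix: "obs_run delta ell q1 (take i v) x" and suffix: "obs_run delta ell x (drop i v) q2"
      using \<open>obs_run delta ell q1 v q2\<close> obs_run_append_iff[of delta ell q1 "take i v" "drop i v"] by auto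
    have reach: "obs_run delta ell q0 (u @ take i v) x"
      using \<open>obs_run delta ell q0 u q1\<close> prefix unfolding obs_run_append_iff by blast
    have "nonsecret_obs_run delta QS ell x (drop i v) q2"
      using shortest_secret_revealed_nonsecret_suffix[OF _ \<open>q0 \<in> Q0\<close> reach suffix] shortest hidden that
      by fastforce
    moreover have "x \<in> Q"
      using obs_run_closed[OF closed(1) _ reach] \<open>q0 \<in> Q0\<close> closed(2) by blast
    ultimately show ?thesis
      using prefix unfolding F_def nonsecret_enabled_def by blast
  qed
  have "F ` {1..length v} \<subseteq> Pow (Q - QS) - {{}}"
    using after_prefix nonsecret_enabled_subset unfolding F_def by fastforce
  then obtain i j where "1 \<le> i" "i < j" "j \<le> length v" "F i = F j"
    using long \<open>finite Q\<close> by (elim pigeonhole_interval) auto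
  then obtain x where "x \<in> F j" "obs_run delta ell q1 (take i v) x"
    using after_prefix by fastforce
  then obtain q where "obs_run delta ell x (drop j v) q"
    unfolding F_def nonsecret_enabled_def by (blast intro: nonsecret_obs_run_imp_obs_run)
  have "nonsecret_observable delta Q0 ell QS ((u @ take i v) @ drop j v) \<longleftrightarrow>
      nonsecret_observable delta Q0 ell QS ((u @ take i v) @ drop i v)"
    using nonsecret_observable_append_cong[OF closed] \<open>F i = F j\<close> unfolding F_def by metis
  then have "secret_revealed delta Q0 ell QS u (take i v @ drop j v)"
    unfolding secret_revealed_def
    using \<open>q0 \<in> Q0\<close> \<open>q1 \<in> QS\<close> \<open>obs_run delta ell q0 u q1\<close> hidden
      \<open>obs_run delta ell q1 (take i v) x\<close> \<open>obs_run delta ell x (drop j v) q\<close>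
    by (auto simp: obs_run_append_iff)
  then have "length v \<le> length (take i v @ drop j v)"
    by (rule shortest)
  with \<open>i < j\<close> \<open>j \<le> length v\<close> show False
    by simp
qed

lemma secret_revealed_within_bound:
  assumes "delta \<subseteq> Q \<times> E \<times> Q" "Q0 \<subseteq> Q" "finite Q"
    and "secret_revealed delta Q0 ell QS u v"
  obtains u' v' where "secret_revealed delta Q0 ell QS u' v'" "length v' < 2 ^ card (Q - QS)"
proof -
  obtain uv where "secret_revealed delta Q0 ell QS (fst uv) (snd uv)"
    and "\<And>uv'. secret_revealed delta Q0 ell QS (fst uv') (snd uv') \<Longrightarrow> length (snd uv) \<le> length (snd uv')"
    using ex_has_least_nat[where P = "\<lambda>uv. secret_revealed delta Q0 ell QS (fst uv) (snd uv)"
        and m = "\<lambda>uv. length (snd uv)" and k = "(u, v)"] assms(4) by auto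
  then show ?thesis
    using shortest_secret_revealed_length[OF assms(1-3)] that by force
qed

theorem corollary4:
  fixes Q :: "'q set" and E :: "'e set" and delta :: "('q \<times> 'e \<times> 'q) set"
    and Q0 :: "'q set" and Sig :: "'s set" and ell :: "'e \<Rightarrow> 's option"
    and QS :: "'q set" and K :: nat
  assumes "lfsa Q E delta Q0 Sig ell"
    and "QS \<subseteq> Q"
    and "K > 0"
    and "int K > 2 ^ card (Q - QS) - 2"
  shows "strong_inf_step_opaque delta Q0 ell QS \<longleftrightarrow> strong_K_step_opaque delta Q0 ell QS K"
proof
  assume "strong_inf_step_opaque delta Q0 ell QS"
  then show "strong_K_step_opaque delta Q0 ell QS K"
    unfolding strong_inf_step_opaque_iff strong_K_step_opaque_iff by blast
next
  assume K_opaque: "strong_K_step_opaque delta Q0 ell QS K"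
  have closed: "delta \<subseteq> Q \<times> E \<times> Q" "Q0 \<subseteq> Q" "finite Q"
    using assms(1) unfolding lfsa_def by auto
  have "int (2 ^ card (Q - QS)) \<le> int K + 1"
    using assms(4) by simp
  then have bound: "2 ^ card (Q - QS) \<le> K + 1"
    by linarith
  show "strong_inf_step_opaque delta Q0 ell QS"
    unfolding strong_inf_step_opaque_iff
  proof (intro allI notI)
    fix u v
    assume "secret_revealed delta Q0 ell QS u v"
    then obtain u' v' where "secret_revealed delta Q0 ell QS u' v'" "length v' < 2 ^ card (Q - QS)"
      by (rule secret_revealed_within_bound[OF closed])
    with K_opaque bound show False
      unfolding strong_K_step_opaque_iff by fastforce
  qed
qed

end
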